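(* Let $G=(V,E)$ be a connected chordal graph of maximum degree $\Delta$ and let $U\subseteq V$ be a nonempty self-contained set. For $v\in U$, let $p_v$ be the fraction of ordered pairs $(a,b)\in U^2$ such that $v$ lies on some shortest path in $G$ between $a$ and $b$. Then $\max_{v\in U}p_v\ge \frac{1}{2(\Delta+1)}$.
   Context: $\delta$ is the shortest-path metric of the unweighted graph $G$. A graph is chordal if every cycle of length greater than three has a chord. A set $U\subseteq V$ is self-contained if for every $(x,y)\in U^2$, every shortest path in $G$ between $x$ and $y$ uses only vertices of $U$. A vertex lies on a path if it is one of its vertices (including endpoints). *)

theory Defs
  imports Complex_Main
begin

definition simple_graph :: "'a set \<Rightarrow> ('a \<Rightarrow> 'a \<Rightarrow> bool) \<Rightarrow> bool" where
  "simple_graph V E \<longleftrightarrow> finite V \<and> (\<forall>x y. E x y \<longrightarrow> x \<in> V \<and> y \<in> V) \<and>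
     (\<forall>x y. E x y \<longrightarrow> E y x) \<and> (\<forall>x. \<not> E x x)"

definition is_walk :: "('a \<Rightarrow> 'a \<Rightarrow> bool) \<Rightarrow> 'a list \<Rightarrow> bool" where
  "is_walk E xs \<longleftrightarrow> xs \<noteq> [] \<and> (\<forall>i. Suc i < length xs \<longrightarrow> E (xs ! i) (xs ! Suc i))"

definition connected_graph :: "'a set \<Rightarrow> ('a \<Rightarrow> 'a \<Rightarrow> bool) \<Rightarrow> bool" where
  "connected_graph V E \<longleftrightarrow>
     (\<forall>x\<in>V. \<forall>y\<in>V. \<exists>xs. is_walk E xs \<and> hd xs = x \<and> last xs = y)"

definition gdist :: "('a \<Rightarrow> 'a \<Rightarrow> bool) \<Rightarrow> 'a \<Rightarrow> 'a \<Rightarrow> nat" where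
  "gdist E x y = (LEAST n. \<exists>xs. is_walk E xs \<and> hd xs = x \<and> last xs = y \<and> length xs = Suc n)"

definition shortest_path :: "('a \<Rightarrow> 'a \<Rightarrow> bool) \<Rightarrow> 'a \<Rightarrow> 'a \<Rightarrow> 'a list \<Rightarrow> bool" where
  "shortest_path E x y xs \<longleftrightarrow>
     is_walk E xs \<and> hd xs = x \<and> last xs = y \<and> length xs = Suc (gdist E x y)"

definition chordal :: "'a set \<Rightarrow> ('a \<Rightarrow> 'a \<Rightarrow> bool) \<Rightarrow> bool" where
  "chordal V E \<longleftrightarrow>
     (\<forall>cs. distinct cs \<and> set cs \<subseteq> V \<and> length cs > 3 \<and>
        (\<forall>i < length cs. E (cs ! i) (cs ! ((i + 1) mod length cs))) \<longrightarrow>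
        (\<exists>i < length cs. \<exists>j < length cs. i \<noteq> j \<and>
            j \<noteq> (i + 1) mod length cs \<and> i \<noteq> (j + 1) mod length cs \<and>
            E (cs ! i) (cs ! j)))"

definition self_contained :: "('a \<Rightarrow> 'a \<Rightarrow> bool) \<Rightarrow> 'a set \<Rightarrow> bool" where
  "self_contained E U \<longleftrightarrow>
     (\<forall>x\<in>U. \<forall>y\<in>U. \<forall>xs. shortest_path E x y xs \<longrightarrow> set xs \<subseteq> U)"

definition max_degree :: "'a set \<Rightarrow> ('a \<Rightarrow> 'a \<Rightarrow> bool) \<Rightarrow> nat" where
  "max_degree V E = Max ((\<lambda>v. card {u \<in> V. E v u}) ` V)"

definition pfrac :: "('a \<Rightarrow> 'a \<Rightarrow> bool) \<Rightarrow> 'a set \<Rightarrow> 'a \<Rightarrow> real" where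
  "pfrac E U v =
     real (card {(a, b) \<in> U \<times> U. \<exists>xs. shortest_path E a b xs \<and> v \<in> set xs})
     / real (card (U \<times> U))"

end

theory Submission
  imports Defs
begin

(*
  A chordal graph has balanced clique separators: inside any finite vertex
  set U there is a clique S \<subseteq> U such that every connected component of the subgraph
  induced by U - S has at most |U|/2 vertices.  We find S by iteration: if a component A
  of U - S is too large, chordality yields a vertex x \<in> A adjacent to all neighbours N of
  A in S (otherwise a shortest path inside A would close a chordless cycle of length
  \<ge> 4), and S' = {x} \<union> N is again a clique whose components are strictly smaller.

  Since U is self-contained, for a pair (a,b) \<in> U \<times> U
  a shortest a-b path stays in U, so either a and b lie in one component of U - S (at most
  |U|^2/2 such pairs) or some s \<in> S lies on a shortest a-b path.  Hence the values
  p_s (s \<in> S) sum to at least 1/2, and as a clique S has at most \<Delta> + 1 vertices, some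
  p_s is at least 1/(2(\<Delta>+1)).
*)

lemma walk_Cons: "is_walk E (x # xs) \<longleftrightarrow> (xs = [] \<or> (E x (hd xs) \<and> is_walk E xs))"
proof (cases xs)
  case Nil thus ?thesis by (simp add: is_walk_def)
next
  case (Cons y ys)
  have "is_walk E (x # xs) \<longleftrightarrow> E x y \<and> (\<forall>i. Suc i < length xs \<longrightarrow> E (xs ! i) (xs ! Suc i))"
    unfolding is_walk_def using Cons by (auto simp: All_less_Suc2)
  thus ?thesis using Cons by (simp add: is_walk_def)
qed

lemma walk_append:
  "is_walk E xs \<Longrightarrow> is_walk E ys \<Longrightarrow> E (last xs) (hd ys) \<Longrightarrow> is_walk E (xs @ ys)"
proof (induction xs)
  case Nil thus ?case by (simp add: is_walk_def)
next
  case (Cons x xs)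
  show ?case
  proof (cases "xs = []")
    case True
    have "ys \<noteq> []" using Cons.prems(2) by (simp add: is_walk_def)
    thus ?thesis using True Cons.prems by (simp add: walk_Cons)
  next
    case False
    thus ?thesis using Cons by (auto simp: walk_Cons)
  qed
qed

lemma walk_take: "is_walk E xs \<Longrightarrow> 0 < n \<Longrightarrow> is_walk E (take n xs)"
  unfolding is_walk_def by auto

lemma walk_drop: "is_walk E xs \<Longrightarrow> n < length xs \<Longrightarrow> is_walk E (drop n xs)"
  unfolding is_walk_def by (auto simp: add.commute)

lemma walk_snocD: "is_walk E (xs @ [x]) \<Longrightarrow> xs \<noteq> [] \<Longrightarrow> is_walk E xs \<and> E (last xs) x"
proof -
  assume h: "is_walk E (xs @ [x])" and ne: "xs \<noteq> []"
  have "is_walk E xs" using walk_take[OF h, of "length xs"] ne by simp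
  moreover have "E ((xs @ [x]) ! (length xs - 1)) ((xs @ [x]) ! Suc (length xs - 1))"
    using h ne unfolding is_walk_def
    by (metis One_nat_def Suc_pred length_append_singleton length_greater_0_conv lessI)
  ultimately show ?thesis using ne by (simp add: last_conv_nth nth_append)
qed

lemma shortest_path_exists:
  assumes "connected_graph V E" "a \<in> V" "b \<in> V"
  shows "\<exists>xs. shortest_path E a b xs"
proof -
  obtain xs where xs: "is_walk E xs" "hd xs = a" "last xs = b"
    using assms unfolding connected_graph_def by blast
  let ?P = "\<lambda>n. \<exists>xs. is_walk E xs \<and> hd xs = a \<and> last xs = b \<and> length xs = Suc n"
  have "?P (length xs - 1)" using xs by (intro exI[of _ xs]) (simp add: is_walk_def)
  hence "?P (LEAST n. ?P n)" by (rule LeastI)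
  thus ?thesis unfolding shortest_path_def gdist_def by blast
qed

inductive reach :: "('a \<Rightarrow> 'a \<Rightarrow> bool) \<Rightarrow> 'a set \<Rightarrow> 'a \<Rightarrow> 'a \<Rightarrow> bool" for E W where
  rrefl: "a \<in> W \<Longrightarrow> reach E W a a"
| rstep: "reach E W a b \<Longrightarrow> E b c \<Longrightarrow> c \<in> W \<Longrightarrow> reach E W a c"

definition component :: "('a \<Rightarrow> 'a \<Rightarrow> bool) \<Rightarrow> 'a set \<Rightarrow> 'a \<Rightarrow> 'a set" where
  "component E W a = {b. reach E W a b}"

lemma reach_in: "reach E W a b \<Longrightarrow> a \<in> W \<and> b \<in> W"
  by (induction rule: reach.induct) auto

lemma component_subset: "component E W a \<subseteq> W"
  unfolding component_def using reach_in by fast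

lemma reach_trans: "reach E W b c \<Longrightarrow> reach E W a b \<Longrightarrow> reach E W a c"
  by (induction rule: reach.induct) (auto intro: reach.rstep)

lemma reach_sym:
  assumes "\<And>x y. E x y \<Longrightarrow> E y x"
  shows "reach E W a b \<Longrightarrow> reach E W b a"
proof (induction rule: reach.induct)
  case (rrefl a) thus ?case by (rule reach.rrefl)
next
  case (rstep a b c)
  have "reach E W c b" using rstep reach_in[OF rstep(1)] assms
    by (meson reach.rrefl reach.rstep)
  thus ?case using rstep reach_trans by metis
qed

lemma walk_reach: "is_walk E xs \<Longrightarrow> set xs \<subseteq> W \<Longrightarrow> reach E W (hd xs) (last xs)"
proof (induction xs rule: rev_induct)
  case Nil thus ?case by (simp add: is_walk_def)
next
  case (snoc x xs)
  show ?case
  proof (cases "xs = []")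
    case True thus ?thesis using snoc.prems by (auto intro: reach.rrefl)
  next
    case False
    thus ?thesis using snoc walk_snocD[OF snoc.prems(1) False] by (auto intro: reach.rstep)
  qed
qed

lemma reach_walk:
  "reach E W a b \<Longrightarrow> \<exists>xs. is_walk E xs \<and> set xs \<subseteq> W \<and> hd xs = a \<and> last xs = b"
proof (induction rule: reach.induct)
  case (rrefl a) thus ?case by (intro exI[of _ "[a]"]) (simp add: is_walk_def)
next
  case (rstep a b c)
  then obtain xs where xs: "is_walk E xs" "set xs \<subseteq> W" "hd xs = a" "last xs = b" by blast
  hence "is_walk E (xs @ [c])" using rstep by (intro walk_append) (auto simp: is_walk_def)
  thus ?case using rstep xs by (intro exI[of _ "xs @ [c]"]) (auto simp: is_walk_def)
qed

lemma reach_within_component: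
  assumes "reach E W x t" "reach E W a x"
  shows "reach E (component E W a) x t"
  using assms
proof (induction rule: reach.induct)
  case (rrefl x) thus ?case by (auto simp: component_def intro: reach.rrefl)
next
  case (rstep x b c)
  have "reach E W a c" using rstep reach_trans by (metis reach.rstep)
  thus ?case using rstep by (auto simp: component_def intro: reach.rstep)
qed

section \<open>Induced paths and chordless cycles\<close>

definition induced_path :: "('a \<Rightarrow> 'a \<Rightarrow> bool) \<Rightarrow> 'a list \<Rightarrow> bool" where
  "induced_path E ps \<longleftrightarrow> is_walk E ps \<and> distinct ps \<and>
     (\<forall>i j. Suc i < j \<longrightarrow> j < length ps \<longrightarrow> \<not> E (ps ! i) (ps ! j))"

lemma induced_path_drop:
  assumes "induced_path E ps" "i < length ps"
  shows "induced_path E (drop i ps)"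
proof -
  have "\<not> E (drop i ps ! k) (drop i ps ! j)" if "Suc k < j" "j < length (drop i ps)" for k j
    using assms that unfolding induced_path_def by (simp add: add.commute)
  thus ?thesis using assms walk_drop unfolding induced_path_def by auto
qed

text \<open>A shortest walk inside A from x to a target set T is an induced path that meets T
  only in its last vertex.\<close>

lemma shortest_walk_to_set:
  assumes "is_walk E qs" "set qs \<subseteq> A" "hd qs = x" "last qs \<in> T"
  obtains ps where "induced_path E ps" "set ps \<subseteq> A" "hd ps = x" "last ps \<in> T"
    "\<forall>v\<in>set (butlast ps). v \<notin> T"
proof -
  define Q where "Q ps = (is_walk E ps \<and> set ps \<subseteq> A \<and> hd ps = x \<and> last ps \<in> T)" for ps
  obtain ps where Qps: "Q ps" and min: "\<And>qs. Q qs \<Longrightarrow> length ps \<le> length qs"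
    using ex_has_least_nat[of Q qs length] assms Q_def by blast
  have wps: "is_walk E ps" and psA: "set ps \<subseteq> A" and hps: "hd ps = x" and lps: "last ps \<in> T"
    using Qps Q_def by auto
  have ne: "ps \<noteq> []" using wps is_walk_def by auto
  have early: "ps ! j \<notin> T" if "Suc j < length ps" for j
  proof
    assume jT: "ps ! j \<in> T"
    have "Q (take (Suc j) ps)" unfolding Q_def
    proof (intro conjI)
      show "is_walk E (take (Suc j) ps)" using walk_take[OF wps] by simp
      show "set (take (Suc j) ps) \<subseteq> A" using psA set_take_subset by fastforce
      show "hd (take (Suc j) ps) = x" using hps ne by simp
      show "last (take (Suc j) ps) \<in> T" using jT that by (simp add: take_Suc_conv_app_nth)
    qed
    from min[OF this] show False using that by simp
  qed
  have chordless: "\<not> E (ps ! i) (ps ! j)" if ij: "Suc i < j" "j < length ps" for i j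
  proof
    assume e: "E (ps ! i) (ps ! j)"
    let ?qs = "take (Suc i) ps @ drop j ps"
    have "Q ?qs" unfolding Q_def
    proof (intro conjI)
      have "last (take (Suc i) ps) = ps ! i" using ij by (simp add: take_Suc_conv_app_nth)
      moreover have "hd (drop j ps) = ps ! j" using ij by (simp add: hd_drop_conv_nth)
      ultimately show "is_walk E ?qs"
        using e walk_take[OF wps, of "Suc i"] walk_drop[OF wps ij(2)] by (intro walk_append) auto
      show "set ?qs \<subseteq> A" using psA set_take_subset set_drop_subset by fastforce
      show "hd ?qs = x" using hps ne by simp
      show "last ?qs \<in> T" using lps ij by simp
    qed
    from min[OF this] show False using ij by simp
  qed
  have "distinct ps"
  proof (rule ccontr)
    assume "\<not> distinct ps"
    then obtain i j where ij: "i < j" "j < length ps" "ps ! i = ps ! j"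
      by (metis distinct_conv_nth linorder_neqE_nat)
    show False
    proof (cases "Suc j = length ps")
      case True
      hence "ps ! j = last ps" using ne by (metis diff_Suc_1 last_conv_nth)
      thus False using ij early[of i] lps by simp
    next
      case False
      hence "E (ps ! i) (ps ! Suc j)" using wps ij unfolding is_walk_def by auto
      thus False using chordless[of i "Suc j"] ij False by simp
    qed
  qed
  moreover have "\<forall>v\<in>set (butlast ps). v \<notin> T"
    using early by (auto simp: in_set_conv_nth nth_butlast)
  ultimately show ?thesis using that wps psA hps lps chordless unfolding induced_path_def by blast
qed

lemma closed_path_cycle:
  assumes sym: "\<And>x y. E x y \<Longrightarrow> E y x" and "is_walk E P" "E w y" "E w (hd P)" "E (last P) y"
    and cs: "cs = w # P @ [y]" and i: "i < length cs"
  shows "E (cs ! i) (cs ! ((i + 1) mod length cs))"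
proof (cases "Suc i = length cs")
  case True
  thus ?thesis using cs sym \<open>E w y\<close> by (simp add: nth_append)
next
  case False
  have ne: "P \<noteq> []" using \<open>is_walk E P\<close> by (simp add: is_walk_def)
  have "is_walk E (P @ [y])"
    using assms(2,5) by (intro walk_append) (auto simp: is_walk_def)
  hence "is_walk E cs" unfolding cs using assms(4) ne by (simp add: walk_Cons)
  thus ?thesis using False i unfolding is_walk_def by simp
qed

lemma closed_path_chordless:
  assumes ind: "\<And>i j. Suc i < j \<Longrightarrow> j < length P \<Longrightarrow> \<not> E (P ! i) (P ! j)"
    and nw: "\<And>j. 0 < j \<Longrightarrow> j < length P \<Longrightarrow> \<not> E w (P ! j)"
    and ny: "\<And>j. Suc j < length P \<Longrightarrow> \<not> E (P ! j) y"
    and cs: "cs = w # P @ [y]"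
    and ij: "i < j" "j < length cs" "j \<noteq> (i + 1) mod length cs" "i \<noteq> (j + 1) mod length cs"
  shows "\<not> E (cs ! i) (cs ! j)"
proof -
  define n where "n = length P"
  have L: "length cs = n + 2" by (simp add: cs n_def)
  have cP: "\<And>k. k < n \<Longrightarrow> cs ! Suc k = P ! k" by (simp add: cs n_def nth_append)
  have cy: "cs ! Suc n = y" by (simp add: cs n_def nth_append)
  have ji: "j \<noteq> i + 1" using ij L by simp
  show ?thesis
  proof (cases i)
    case 0
    hence "j \<noteq> n + 1" using ij L by auto
    then obtain k where "j = Suc k" "0 < k" "k < n" using ij ji 0 L by (cases j) auto
    thus ?thesis using 0 cs cP[of k] nw[of k] n_def by simp
  next
    case (Suc k)
    show ?thesis
    proof (cases "j = n + 1")
      case True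
      hence "Suc k < n" using Suc ji ij by auto
      thus ?thesis using True Suc cy cP[of k] ny[of k] n_def by simp
    next
      case False
      then obtain l where l: "j = Suc l" "l < n" "Suc k < l" using ij Suc ji L by (cases j) auto
      thus ?thesis using Suc cP ind[of k l] n_def by simp
    qed
  qed
qed

lemma chordal_no_closed_path:
  assumes ch: "chordal V E" and sym: "\<And>x y. E x y \<Longrightarrow> E y x"
    and P: "induced_path E P" "length P \<ge> 2" "set P \<subseteq> V"
    and wy: "w \<in> V" "y \<in> V" "w \<notin> set P" "y \<notin> set P" "w \<noteq> y"
    and edges: "E w y" "E w (hd P)" "E (last P) y"
    and nw: "\<And>j. 0 < j \<Longrightarrow> j < length P \<Longrightarrow> \<not> E w (P ! j)"
    and ny: "\<And>j. Suc j < length P \<Longrightarrow> \<not> E (P ! j) y"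
  shows False
proof -
  define cs where "cs = w # P @ [y]"
  have "distinct cs" "set cs \<subseteq> V" "length cs > 3"
    using P wy by (auto simp: cs_def induced_path_def)
  moreover have "\<forall>i < length cs. E (cs ! i) (cs ! ((i + 1) mod length cs))"
    using closed_path_cycle[OF sym _ edges cs_def] P by (auto simp: induced_path_def)
  ultimately obtain i j where ij: "i < length cs" "j < length cs" "i \<noteq> j"
      "j \<noteq> (i + 1) mod length cs" "i \<noteq> (j + 1) mod length cs" "E (cs ! i) (cs ! j)"
    using ch unfolding chordal_def by blast
  have ind: "\<And>i j. Suc i < j \<Longrightarrow> j < length P \<Longrightarrow> \<not> E (P ! i) (P ! j)"
    using P by (simp add: induced_path_def)
  show False
  proof (cases "i < j")
    case True
    thus False using closed_path_chordless[OF ind nw ny cs_def, of i j] ij by simp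
  next
    case False
    hence "j < i" using ij by simp
    thus False using closed_path_chordless[OF ind nw ny cs_def, of j i] ij sym by blast
  qed
qed

text \<open>Cutting the
  path at its last neighbour of w produces the forbidden configuration.\<close>

lemma chordal_path_between_adjacent:
  assumes ch: "chordal V E" and sym: "\<And>x y. E x y \<Longrightarrow> E y x"
    and ps: "induced_path E ps" "set ps \<subseteq> V"
    and wy: "w \<in> V" "y \<in> V" "w \<notin> set ps" "y \<notin> set ps" "w \<noteq> y"
    and edges: "E w y" "E w (hd ps)" "\<not> E w (last ps)" "E (last ps) y"
    and ny: "\<forall>v\<in>set (butlast ps). \<not> E v y"
  shows False
proof -
  have ne: "ps \<noteq> []" using ps by (simp add: induced_path_def is_walk_def)
  define I where "I = {j. j < length ps \<and> E w (ps ! j)}"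
  define i where "i = Max I"
  have "0 \<in> I" using I_def ne edges by (simp add: hd_conv_nth)
  have finI: "finite I" by (simp add: I_def)
  have iI: "i \<in> I" unfolding i_def using Max_in[OF finI] \<open>0 \<in> I\<close> by blast
  have imax: "\<And>j. j \<in> I \<Longrightarrow> j \<le> i" unfolding i_def using finI by simp
  have "i \<noteq> length ps - 1" using iI edges ne by (auto simp: I_def last_conv_nth)
  hence i_last: "Suc i < length ps" using iI by (auto simp: I_def)
  define P where "P = drop i ps"
  have Pn: "\<And>j. j < length P \<Longrightarrow> P ! j = ps ! (i + j)" using P_def i_last by simp
  show False
  proof (rule chordal_no_closed_path[OF ch sym, of P w y])
    show "induced_path E P" using induced_path_drop[OF ps(1)] i_last P_def by simp
    show "length P \<ge> 2" "set P \<subseteq> V" using i_last ps(2) P_def by (auto dest: in_set_dropD)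
    show "w \<in> V" "y \<in> V" "w \<noteq> y" using wy by auto
    show "w \<notin> set P" "y \<notin> set P" using wy P_def by (auto dest: in_set_dropD)
    show "E w y" "E w (hd P)" "E (last P) y"
      using edges iI i_last P_def by (auto simp: I_def hd_drop_conv_nth)
    show "\<not> E w (P ! j)" if "0 < j" "j < length P" for j
    proof
      assume "E w (P ! j)"
      hence "i + j \<in> I" using that Pn P_def by (auto simp: I_def)
      thus False using imax that by fastforce
    qed
    show "\<not> E (P ! j) y" if "Suc j < length P" for j
    proof -
      have "ps ! (i + j) \<in> set (butlast ps)"
        using that P_def by (auto simp: in_set_conv_nth nth_butlast intro!: exI[of _ "i + j"])
      thus ?thesis using ny Pn that by simp
    qed
  qed
qed

section \<open>Balanced clique separators in chordal graphs\<close>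

definition clique :: "('a \<Rightarrow> 'a \<Rightarrow> bool) \<Rightarrow> 'a set \<Rightarrow> bool" where
  "clique E S \<longleftrightarrow> (\<forall>u\<in>S. \<forall>v\<in>S. u \<noteq> v \<longrightarrow> E u v)"

definition balanced_separator :: "('a \<Rightarrow> 'a \<Rightarrow> bool) \<Rightarrow> 'a set \<Rightarrow> 'a set \<Rightarrow> bool" where
  "balanced_separator E U S \<longleftrightarrow> S \<subseteq> U \<and> clique E S \<and>
     (\<forall>b\<in>U - S. 2 * card (component E (U - S) b) \<le> card U)"

text \<open>Take x \<in> A with the
  most such neighbours; a non-neighbour y of x would, via a shortest path in A from x to a
  neighbour of y, close a chordless cycle with a neighbour w of x that the path's end misses.\<close>

lemma component_dominating_vertex:
  assumes ch: "chordal V E" and sym: "\<And>x y. E x y \<Longrightarrow> E y x"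
    and finV: "finite V" and UV: "U \<subseteq> V" and SU: "S \<subseteq> U" and cl: "clique E S"
    and a: "a \<in> U - S"
    and A_def: "A = component E (U - S) a" and N_def: "N = {s\<in>S. \<exists>z\<in>A. E z s}"
  shows "\<exists>x\<in>A. \<forall>y\<in>N. E x y"
proof -
  have AUS: "A \<subseteq> U - S" using A_def component_subset by metis
  have finA: "finite A" and finN: "finite N"
    using AUS SU UV finV N_def by (auto intro: finite_subset)
  have aA: "a \<in> A" using a A_def by (auto simp: component_def intro: reach.rrefl)
  define f where "f z = card (N \<inter> {y. E z y})" for z
  obtain x where xA: "x \<in> A" and xmax: "\<And>z. z \<in> A \<Longrightarrow> f z \<le> f x"
  proof -
    have "Max (f ` A) \<in> f ` A" using finA aA by (intro Max_in) auto
    then obtain x where "x \<in> A" "f x = Max (f ` A)" by auto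
    thus ?thesis using that finA by simp
  qed
  show ?thesis
  proof (rule ccontr)
    assume "\<not> ?thesis"
    then obtain y where yN: "y \<in> N" and nxy: "\<not> E x y" using xA by blast
    define T where "T = {z\<in>A. E z y}"
    obtain t where tT: "t \<in> T" using yN N_def T_def by auto
    have rx: "reach E (U - S) a x" and rt: "reach E (U - S) a t"
      using xA tT A_def T_def by (auto simp: component_def)
    have "reach E A x t"
      using reach_within_component[OF reach_trans[OF rt reach_sym[OF sym rx]] rx] A_def by simp
    then obtain qs where "is_walk E qs" "set qs \<subseteq> A" "hd qs = x" "last qs = t"
      using reach_walk by metis
    then obtain ps where ps: "induced_path E ps" "set ps \<subseteq> A" "hd ps = x" "last ps \<in> T"
      and early: "\<forall>v\<in>set (butlast ps). v \<notin> T"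
      using shortest_walk_to_set tT by metis
    have ne: "ps \<noteq> []" using ps by (simp add: induced_path_def is_walk_def)
    have lastA: "last ps \<in> A" using ps ne by auto
    text \<open>By maximality of x, some neighbour w \<in> N of x is missed by the path's end.\<close>
    obtain w where wN: "w \<in> N" and xw: "E x w" and nlw: "\<not> E (last ps) w"
    proof (rule ccontr)
      assume "\<not> thesis"
      hence "N \<inter> {y. E x y} \<subset> N \<inter> {y'. E (last ps) y'}"
        using that yN nxy ps(4) T_def by blast
      hence "f x < f (last ps)" unfolding f_def using finN by (intro psubset_card_mono) auto
      thus False using xmax[OF lastA] by simp
    qed
    have wS: "w \<in> S" and yS: "y \<in> S" using wN yN N_def by auto
    have wy: "w \<noteq> y" using xw nxy by auto
    show False
    proof (rule chordal_path_between_adjacent[OF ch sym ps(1)])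
      show "set ps \<subseteq> V" "w \<in> V" "y \<in> V" "w \<notin> set ps" "y \<notin> set ps"
        using ps(2) AUS SU UV wS yS by auto
      show "w \<noteq> y" "E w y" using wy cl wS yS by (auto simp: clique_def)
      show "E w (hd ps)" "\<not> E w (last ps)" "E (last ps) y"
        using ps xw nlw sym T_def by auto
      show "\<forall>v\<in>set (butlast ps). \<not> E v y"
        using early ps(2) T_def by (auto dest: in_set_butlastD)
    qed
  qed
qed

text \<open>One refinement step: a too large component A of U - S can be eliminated by
  replacing S with x plus the neighbours of A in S; all new components are smaller than A.\<close>

lemma separator_refinement_step:
  assumes ch: "chordal V E" and sym: "\<And>x y. E x y \<Longrightarrow> E y x"
    and finV: "finite V" and UV: "U \<subseteq> V" and SU: "S \<subseteq> U" and cl: "clique E S"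
    and a: "a \<in> U - S" and big: "card U < 2 * card (component E (U - S) a)"
  shows "\<exists>S'. S' \<subseteq> U \<and> clique E S' \<and>
    (\<forall>b\<in>U - S'. card (component E (U - S') b) < card (component E (U - S) a))"
proof -
  define A where "A = component E (U - S) a"
  define N where "N = {s\<in>S. \<exists>z\<in>A. E z s}"
  obtain x where xA: "x \<in> A" and xN: "\<forall>y\<in>N. E x y"
    using component_dominating_vertex[OF ch sym finV UV SU cl a A_def N_def] by blast
  have AUS: "A \<subseteq> U - S" unfolding A_def by (rule component_subset)
  have finU: "finite U" using UV finV by (rule finite_subset)
  have finA: "finite A" using AUS finU by (auto intro: finite_subset)
  define S' where "S' = insert x N"
  have S'U: "S' \<subseteq> U" using S'_def N_def SU xA AUS by blast
  have cl': "clique E S'"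
    using cl xN sym unfolding clique_def S'_def N_def by blast
  text \<open>A walk avoiding S' that starts in A stays in A - {x}: leaving A means entering S,
    and the entry vertex would lie in N.\<close>
  have stays: "c \<in> A - {x}" if "reach E (U - S') b c" "b \<in> A" for b c
    using that
  proof (induction rule: reach.induct)
    case (rrefl b) thus ?case using S'_def by auto
  next
    case (rstep b c d)
    have "d \<notin> S" using rstep N_def S'_def by blast
    hence "reach E (U - S) a d"
      using rstep A_def reach.rstep[of E "U - S" a c d] by (auto simp: component_def)
    thus ?case using A_def rstep(3) S'_def by (auto simp: component_def)
  qed
  have "card (component E (U - S') b) < card A" if b: "b \<in> U - S'" for b
  proof (cases "b \<in> A")
    case True
    have "component E (U - S') b \<subseteq> A - {x}" using stays True by (auto simp: component_def)
    hence "card (component E (U - S') b) \<le> card (A - {x})" using finA by (intro card_mono) auto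
    thus ?thesis using card_Diff1_less[OF finA xA] by linarith
  next
    case False
    have "c \<notin> A" if "c \<in> component E (U - S') b" for c
      using stays reach_sym[of E, OF sym, of "U - S'" b c] that False by (auto simp: component_def)
    hence "component E (U - S') b \<subseteq> U - A" using component_subset[of E "U - S'" b] by blast
    hence "card (component E (U - S') b) \<le> card (U - A)" using finU by (intro card_mono) auto
    also have "card (U - A) = card U - card A" using AUS by (intro card_Diff_subset[OF finA]) auto
    finally show ?thesis using big A_def by simp
  qed
  thus ?thesis using S'U cl' A_def by blast
qed

text \<open>Iterating the refinement step (induction on the largest component size) from any
  clique yields a balanced one; starting from the empty clique gives existence.\<close>

lemma balanced_separator_exists:
  assumes ch: "chordal V E" and sym: "\<And>x y. E x y \<Longrightarrow> E y x"
    and finV: "finite V" and UV: "U \<subseteq> V"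
  shows "\<exists>S. balanced_separator E U S"
proof -
  have refine: "\<exists>S'. balanced_separator E U S'"
    if "S \<subseteq> U" "clique E S" "\<forall>b\<in>U - S. card (component E (U - S) b) < k" for S k
    using that
  proof (induction k arbitrary: S rule: less_induct)
    case (less k)
    show ?case
    proof (cases "balanced_separator E U S")
      case False
      then obtain a where a: "a \<in> U - S" and big: "card U < 2 * card (component E (U - S) a)"
        using less.prems by (auto simp: balanced_separator_def not_le)
      obtain S' where S': "S' \<subseteq> U" "clique E S'"
        and smaller: "\<forall>b\<in>U - S'. card (component E (U - S') b) < card (component E (U - S) a)"
        using separator_refinement_step[OF ch sym finV UV less.prems(1,2) a big] by blast
      have "card (component E (U - S) a) < k" using less.prems(3) a by blast
      thus ?thesis using less.IH S' smaller by blast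
    qed blast
  qed
  have "card (component E U b) < Suc (card U)" for b
    using component_subset finV UV by (metis card_mono finite_subset le_imp_less_Suc)
  thus ?thesis using refine[of "{}" "Suc (card U)"] by (simp add: clique_def)
qed

text \<open>A clique has at most \<Delta> + 1 vertices: all but one are neighbours of the other.\<close>

lemma clique_card_le_max_degree:
  assumes "simple_graph V E" "clique E S" "S \<subseteq> V" "s \<in> S"
  shows "card S \<le> max_degree V E + 1"
proof -
  have finV: "finite V" and EV: "\<And>x y. E x y \<Longrightarrow> y \<in> V"
    using assms(1) unfolding simple_graph_def by auto
  have "S \<subseteq> insert s {u \<in> V. E s u}" using assms(2,3,4) EV by (auto simp: clique_def)
  hence "card S \<le> card (insert s {u \<in> V. E s u})" using finV by (intro card_mono) auto
  also have "\<dots> \<le> card {u \<in> V. E s u} + 1" by (simp add: card_insert_le_m1 card_insert_if)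
  also have "card {u \<in> V. E s u} \<le> max_degree V E"
    unfolding max_degree_def using finV assms(3,4) by (intro Max_ge) auto
  finally show ?thesis by simp
qed

section \<open>Counting pairs through a separator\<close>

definition geodesic_pairs :: "('a \<Rightarrow> 'a \<Rightarrow> bool) \<Rightarrow> 'a set \<Rightarrow> 'a \<Rightarrow> ('a \<times> 'a) set" where
  "geodesic_pairs E U v = {(a, b) \<in> U \<times> U. \<exists>xs. shortest_path E a b xs \<and> v \<in> set xs}"

lemma pfrac_geodesic_pairs:
  "pfrac E U v = real (card (geodesic_pairs E U v)) / real (card (U \<times> U))"
  by (simp add: pfrac_def geodesic_pairs_def)

lemma pairs_covered_by_separator:
  assumes "connected_graph V E" "U \<subseteq> V" "self_contained E U"
  shows "U \<times> U \<subseteq> Sigma (U - S) (component E (U - S)) \<union> (\<Union>s\<in>S. geodesic_pairs E U s)"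
proof
  fix p assume "p \<in> U \<times> U"
  then obtain a b where ab: "p = (a, b)" "a \<in> U" "b \<in> U" by blast
  obtain xs where sp: "shortest_path E a b xs"
    using shortest_path_exists[OF assms(1)] ab assms(2) by blast
  have xsU: "set xs \<subseteq> U" using assms(3) sp ab unfolding self_contained_def by blast
  show "p \<in> Sigma (U - S) (component E (U - S)) \<union> (\<Union>s\<in>S. geodesic_pairs E U s)"
  proof (cases "\<exists>s\<in>S. s \<in> set xs")
    case True
    thus ?thesis using ab sp unfolding geodesic_pairs_def by blast
  next
    case False
    hence "set xs \<subseteq> U - S" using xsU by blast
    hence r: "reach E (U - S) a b"
      using walk_reach[of E xs] sp unfolding shortest_path_def by auto
    thus ?thesis using reach_in[OF r] ab by (simp add: component_def)
  qed
qed


lemma component_pairs_bound: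
  assumes finU: "finite U" and bal: "balanced_separator E U S"
  shows "2 * card (Sigma (U - S) (component E (U - S))) \<le> card U * card U"
proof -
  have fin: "finite (component E (U - S) a)" for a
    using component_subset finU by (metis finite_Diff finite_subset)
  have "2 * card (Sigma (U - S) (component E (U - S)))
      = (\<Sum>a\<in>U - S. 2 * card (component E (U - S) a))"
    using finU fin by (simp add: sum_distrib_left)
  also have "\<dots> \<le> (\<Sum>a\<in>U - S. card U)"
    using bal by (intro sum_mono) (auto simp: balanced_separator_def)
  also have "\<dots> \<le> card U * card U" using finU by (simp add: card_mono)
  finally show ?thesis .
qed

lemma separator_pfrac_sum:
  assumes "connected_graph V E" "U \<subseteq> V" "finite U" "U \<noteq> {}" "self_contained E U"
    and bal: "balanced_separator E U S"
  shows "1 / 2 \<le> (\<Sum>s\<in>S. pfrac E U s)"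
proof -
  have finS: "finite S" using bal assms(3) by (auto simp: balanced_separator_def intro: finite_subset)
  have finP: "finite (geodesic_pairs E U s)" for s
    using assms(3) by (auto simp: geodesic_pairs_def intro: finite_subset[of _ "U \<times> U"])
  let ?R = "Sigma (U - S) (component E (U - S))"
  have "?R \<subseteq> U \<times> U" using component_subset by fast
  hence finR: "finite ?R" using assms(3) by (auto intro: finite_subset)
  have "card U * card U = card (U \<times> U)" by (simp add: card_cartesian_product)
  also have "\<dots> \<le> card (?R \<union> (\<Union>s\<in>S. geodesic_pairs E U s))"
    using pairs_covered_by_separator[OF assms(1,2,5)] finR finS finP by (intro card_mono) auto
  also have "\<dots> \<le> card ?R + card (\<Union>s\<in>S. geodesic_pairs E U s)" by (rule card_Un_le)
  also have "card (\<Union>s\<in>S. geodesic_pairs E U s) \<le> (\<Sum>s\<in>S. card (geodesic_pairs E U s))"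
    using finS by (rule card_UN_le)
  finally have "card U * card U \<le> 2 * (\<Sum>s\<in>S. card (geodesic_pairs E U s))"
    using component_pairs_bound[OF assms(3) bal] by linarith
  hence "real (card U) * real (card U) \<le> 2 * (\<Sum>s\<in>S. real (card (geodesic_pairs E U s)))"
    by (metis of_nat_le_iff of_nat_mult of_nat_numeral of_nat_sum)
  moreover have "real (card U) * real (card U) > 0" using assms(3,4) by (simp add: card_gt_0_iff)
  ultimately show ?thesis
    by (simp add: pfrac_geodesic_pairs card_cartesian_product sum_divide_distrib[symmetric]
        divide_simps)
qed

lemma Max_ge_average:
  fixes f :: "'a \<Rightarrow> real"
  assumes "finite U" "S \<subseteq> U" "S \<noteq> {}" "c \<le> (\<Sum>s\<in>S. f s)"
  shows "c / real (card S) \<le> Max (f ` U)"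
proof -
  have finS: "finite S" using assms(2,1) by (rule finite_subset)
  have "(\<Sum>s\<in>S. f s) \<le> (\<Sum>s\<in>S. Max (f ` U))"
    using assms by (intro sum_mono Max_ge) auto
  hence "c \<le> real (card S) * Max (f ` U)" using assms(4) by simp
  thus ?thesis using finS assms(3) by (simp add: divide_simps card_gt_0_iff mult.commute)
qed

theorem lemma14:
  fixes V :: "'a set" and E :: "'a \<Rightarrow> 'a \<Rightarrow> bool" and U :: "'a set"
  assumes "simple_graph V E"
    and "connected_graph V E"
    and "chordal V E"
    and "U \<subseteq> V" and "U \<noteq> {}"
    and "self_contained E U"
  shows "Max ((\<lambda>v. pfrac E U v) ` U) \<ge> 1 / (2 * (real (max_degree V E) + 1))"
proof -
  have finV: "finite V" and sym: "\<And>x y. E x y \<Longrightarrow> E y x"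
    using assms(1) unfolding simple_graph_def by auto
  have finU: "finite U" using assms(4) finV by (rule finite_subset)
  obtain S where bal: "balanced_separator E U S"
    using balanced_separator_exists[OF assms(3) sym finV assms(4)] by blast
  have SU: "S \<subseteq> U" and cl: "clique E S" using bal by (auto simp: balanced_separator_def)
  have half: "1 / 2 \<le> (\<Sum>s\<in>S. pfrac E U s)"
    using separator_pfrac_sum[OF assms(2,4) finU assms(5,6) bal] .
  then obtain s where s: "s \<in> S" by fastforce
  have "card S \<le> max_degree V E + 1"
    using clique_card_le_max_degree[OF assms(1) cl _ s] SU assms(4) by blast
  moreover have "card S > 0" using s SU finU by (auto simp: card_gt_0_iff intro: finite_subset)
  ultimately have "1 / (2 * (real (max_degree V E) + 1)) \<le> 1 / (2 * real (card S))"
    by (intro divide_left_mono) auto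
  also have "\<dots> = (1 / 2) / real (card S)" by simp
  also have "\<dots> \<le> Max ((\<lambda>v. pfrac E U v) ` U)"
    using Max_ge_average[OF finU SU _ half] s by blast
  finally show ?thesis .
qed

end
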